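(* Let $V$ be a Banach $\mathbb O$-bimodule, $J\in\mathbb S$, and let $T=T_0+J\odot T_1$ and $S=S_0+J\odot S_1$ with $T_0,T_1,S_0,S_1\in\mathscr B_{\mathbb O}(V)$. Then $T\circ S=T\circledcirc S$. Consequently every such $T$ is power-associative, with $T^n=T^{\circledcirc n}$ for all $n$.
   Context: $\mathbb O$ is the real octonion algebra with basis $e_0=1,\dots,e_7$; $\mathbb S=\{J:J^2=-1\}$. An $\mathbb O$-bimodule is a real vector space $M$ with real-bilinear left and right multiplications by $\mathbb O$ (with $1x=x1=x$) whose associators $[p,q,x]=(pq)x-p(qx)$, $[p,x,q]=(px)q-p(xq)$, $[x,p,q]=(xp)q-x(pq)$ satisfy $[p,q,x]=[q,x,p]=[x,p,q]=-[q,p,x]$. $\operatorname{Re}M=\{m: pm=mp,\ [p,q,m]=0\ \forall p,q\}$; every $x=\sum_ix_ie_i$ uniquely with $x_i\in\operatorname{Re}M$, $\operatorname{Re}x:=x_0$. A Banach $\mathbb O$-bimodule has a complete norm with $\|px\|=\|xp\|=|p|\|x\|$. $B_p(f,x)=f(x)p-f(xp)$; $\mathscr B_{\mathcal{RO}}(V)$: bounded real-linear $f$ with $\operatorname{Re}B_p(f,x)=0$ for all $p,x$; $\mathscr B_{\mathbb O}(V)$: bounded octonionic linear operators ($f(xp)=f(x)p$). $(p\odot f)(x)=pf(x)+B_p(f,x)$. For $f,g\in\mathscr B_{\mathcal{RO}}(V)$, $f\circledcirc g=\operatorname{ext}((f\circ g)|_{\operatorname{Re}V})$ where $(\operatorname{ext}h)(\sum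 x_ie_i)=\sum h(x_i)e_i$ ($x_i\in\operatorname{Re}V$). $T^{\circledcirc n}=\operatorname{ext}(T^n|_{\operatorname{Re}V})$, $T^n$ the ordinary power. $T$ is power-associative if $T^n\in\mathscr B_{\mathcal{RO}}(V)$ for all $n$. *)

theory Defs
  imports "HOL-Analysis.Analysis"
begin

text \<open>Octonions are elements of real^8; coordinate k (0 \<le> k \<le> 7) is the
coefficient of e_k.  The norm is the Euclidean norm |p|.\<close>

type_synonym octo = "real ^ 8"

definition oe :: "nat \<Rightarrow> octo" where
  "oe n = axis (of_nat n :: 8) 1"

text \<open>Fano-plane multiplication table: e_i e_(i+1) = e_(i+3) (indices mod 7 in 1..7),
i.e. the quaternionic triples below, closed under cyclic permutation.\<close>

definition oct_triples :: "(nat \<times> nat \<times> nat) list" where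
  "oct_triples = concat (map (\<lambda>(a,b,c). [(a,b,c),(b,c,a),(c,a,b)])
     [(1,2,4),(2,3,5),(3,4,6),(4,5,7),(5,6,1),(6,7,2),(7,1,3)])"

definition obasis_mult :: "nat \<Rightarrow> nat \<Rightarrow> real \<times> nat" where
  "obasis_mult i j =
    (if i = 0 then (1, j) else if j = 0 then (1, i) else if i = j then (-1, 0)
     else (case find (\<lambda>(a,b,c). a = i \<and> b = j) oct_triples of
             Some (_,_,c) \<Rightarrow> (1, c)
           | None \<Rightarrow> (case find (\<lambda>(a,b,c). a = j \<and> b = i) oct_triples of
                        Some (_,_,c) \<Rightarrow> (-1, c)
                      | None \<Rightarrow> (0, 0))))"

definition omult :: "octo \<Rightarrow> octo \<Rightarrow> octo" (infixl "\<cdot>\<^sub>O" 70) where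
  "p \<cdot>\<^sub>O q = (\<Sum>i<8. \<Sum>j<8. (p $ of_nat i * q $ of_nat j * fst (obasis_mult i j))
                                   *\<^sub>R oe (snd (obasis_mult i j)))"

definition oct_sphere :: "octo set" where
  "oct_sphere = {J. J \<cdot>\<^sub>O J = - oe 0}"

text \<open>lm is the left multiplication p x, rm the right multiplication x p.\<close>

definition assocL :: "(octo \<Rightarrow> 'v::real_vector \<Rightarrow> 'v) \<Rightarrow> octo \<Rightarrow> octo \<Rightarrow> 'v \<Rightarrow> 'v" where
  "assocL lm p q x = lm (p \<cdot>\<^sub>O q) x - lm p (lm q x)"

definition assocM :: "(octo \<Rightarrow> 'v::real_vector \<Rightarrow> 'v) \<Rightarrow> ('v \<Rightarrow> octo \<Rightarrow> 'v) \<Rightarrow> octo \<Rightarrow> 'v \<Rightarrow> octo \<Rightarrow> 'v" where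
  "assocM lm rm p x q = rm (lm p x) q - lm p (rm x q)"

definition assocR :: "('v::real_vector \<Rightarrow> octo \<Rightarrow> 'v) \<Rightarrow> 'v \<Rightarrow> octo \<Rightarrow> octo \<Rightarrow> 'v" where
  "assocR rm x p q = rm (rm x p) q - rm x (p \<cdot>\<^sub>O q)"

definition O_bimodule :: "(octo \<Rightarrow> 'v::real_vector \<Rightarrow> 'v) \<Rightarrow> ('v \<Rightarrow> octo \<Rightarrow> 'v) \<Rightarrow> bool" where
  "O_bimodule lm rm \<longleftrightarrow>
     (\<forall>x. linear (\<lambda>p. lm p x)) \<and> (\<forall>p. linear (lm p)) \<and>
     (\<forall>x. linear (rm x)) \<and> (\<forall>p. linear (\<lambda>x. rm x p)) \<and>
     (\<forall>x. lm (oe 0) x = x \<and> rm x (oe 0) = x) \<and>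
     (\<forall>p q x. assocL lm p q x = assocM lm rm q x p \<and>
              assocM lm rm q x p = assocR rm x p q \<and>
              assocR rm x p q = - assocL lm q p x)"

definition Banach_O_bimodule :: "(octo \<Rightarrow> 'v::banach \<Rightarrow> 'v) \<Rightarrow> ('v \<Rightarrow> octo \<Rightarrow> 'v) \<Rightarrow> bool" where
  "Banach_O_bimodule lm rm \<longleftrightarrow> O_bimodule lm rm \<and>
     (\<forall>p x. norm (lm p x) = norm p * norm x \<and> norm (rm x p) = norm p * norm x)"

definition ReM :: "(octo \<Rightarrow> 'v::real_vector \<Rightarrow> 'v) \<Rightarrow> ('v \<Rightarrow> octo \<Rightarrow> 'v) \<Rightarrow> 'v set" where
  "ReM lm rm = {m. (\<forall>p. lm p m = rm m p) \<and> (\<forall>p q. assocL lm p q m = 0)}"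

definition rcomp :: "(octo \<Rightarrow> 'v::real_vector \<Rightarrow> 'v) \<Rightarrow> ('v \<Rightarrow> octo \<Rightarrow> 'v) \<Rightarrow> 'v \<Rightarrow> nat \<Rightarrow> 'v" where
  "rcomp lm rm x = (THE c. (\<forall>i<8. c i \<in> ReM lm rm) \<and> (\<forall>i\<ge>8. c i = 0) \<and>
                           x = (\<Sum>i<8. rm (c i) (oe i)))"

definition RePart :: "(octo \<Rightarrow> 'v::real_vector \<Rightarrow> 'v) \<Rightarrow> ('v \<Rightarrow> octo \<Rightarrow> 'v) \<Rightarrow> 'v \<Rightarrow> 'v" where
  "RePart lm rm x = rcomp lm rm x 0"

definition oext :: "(octo \<Rightarrow> 'v::real_vector \<Rightarrow> 'v) \<Rightarrow> ('v \<Rightarrow> octo \<Rightarrow> 'v) \<Rightarrow> ('v \<Rightarrow> 'v) \<Rightarrow> 'v \<Rightarrow> 'v" where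
  "oext lm rm h x = (\<Sum>i<8. rm (h (rcomp lm rm x i)) (oe i))"

definition Bp :: "('v::real_vector \<Rightarrow> octo \<Rightarrow> 'v) \<Rightarrow> octo \<Rightarrow> ('v \<Rightarrow> 'v) \<Rightarrow> 'v \<Rightarrow> 'v" where
  "Bp rm p f x = rm (f x) p - f (rm x p)"

definition B_RO :: "(octo \<Rightarrow> 'v::real_normed_vector \<Rightarrow> 'v) \<Rightarrow> ('v \<Rightarrow> octo \<Rightarrow> 'v) \<Rightarrow> ('v \<Rightarrow> 'v) set" where
  "B_RO lm rm = {f. bounded_linear f \<and> (\<forall>p x. RePart lm rm (Bp rm p f x) = 0)}"

definition B_O :: "('v::real_normed_vector \<Rightarrow> octo \<Rightarrow> 'v) \<Rightarrow> ('v \<Rightarrow> 'v) set" where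
  "B_O rm = {f. bounded_linear f \<and> (\<forall>x p. f (rm x p) = rm (f x) p)}"

definition odot :: "(octo \<Rightarrow> 'v::real_vector \<Rightarrow> 'v) \<Rightarrow> ('v \<Rightarrow> octo \<Rightarrow> 'v) \<Rightarrow> octo \<Rightarrow> ('v \<Rightarrow> 'v) \<Rightarrow> 'v \<Rightarrow> 'v" where
  "odot lm rm p f x = lm p (f x) + Bp rm p f x"

text \<open>f \<circledcirc> g = ext((f \<circ> g) restricted to Re V); ext only evaluates its argument on Re V.\<close>

definition ocirc :: "(octo \<Rightarrow> 'v::real_vector \<Rightarrow> 'v) \<Rightarrow> ('v \<Rightarrow> octo \<Rightarrow> 'v) \<Rightarrow> ('v \<Rightarrow> 'v) \<Rightarrow> ('v \<Rightarrow> 'v) \<Rightarrow> 'v \<Rightarrow> 'v" where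
  "ocirc lm rm f g = oext lm rm (f \<circ> g)"

definition opow :: "(octo \<Rightarrow> 'v::real_vector \<Rightarrow> 'v) \<Rightarrow> ('v \<Rightarrow> octo \<Rightarrow> 'v) \<Rightarrow> ('v \<Rightarrow> 'v) \<Rightarrow> nat \<Rightarrow> 'v \<Rightarrow> 'v" where
  "opow lm rm T n = oext lm rm (T ^^ n)"

definition power_associative :: "(octo \<Rightarrow> 'v::real_normed_vector \<Rightarrow> 'v) \<Rightarrow> ('v \<Rightarrow> octo \<Rightarrow> 'v) \<Rightarrow> ('v \<Rightarrow> 'v) \<Rightarrow> bool" where
  "power_associative lm rm T \<longleftrightarrow> (\<forall>n. T ^^ n \<in> B_RO lm rm)"

end

(*
  The associator identities make the left multiplications L_i by e_1, ..., e_7 of an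
  O-bimodule anticommuting square roots of -1, and the two critical pairs of the rules that
  push right multiplications inwards express R_1 through them. Squaring that formula forces
  the volume element L_1 ... L_7 to act as -1. After that, every identity needed about
  re_proj = (1/8)(1 - sum of L_a L_b L_c over the seven Fano lines) is a Clifford-algebra
  normalisation: re_proj lands in Re M and x is the sum of the e_i x_i. An operator commuting
  with right multiplications preserves Re M and hence commutes with all left multiplications,
  so the operators T0 + J T1 are closed under composition (J^2 = -1), commute with right
  multiplication on Re M, and thus agree with their extension; and B_p(T, x) is a middle
  associator, which has no real part.
*)

theory Submission
  imports Defs
begin

(* Keeps oe 1 from being rewritten to oe (Suc 0), where the multiplication table would no
   longer apply. *)
declare One_nat_def [simp del]

section \<open>Octonion arithmetic\<close>

lemma less_8_cases:
  assumes "i < (8::nat)"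
  obtains "i = 0" | "i = 1" | "i = 2" | "i = 3" | "i = 4" | "i = 5" | "i = 6" | "i = 7"
proof -
  have "i = 0 \<or> i = 1 \<or> i = 2 \<or> i = 3 \<or> i = 4 \<or> i = 5 \<or> i = 6 \<or> i = 7"
    using assms by presburger
  then show ?thesis using that by blast
qed

lemma sum_lessThan_8: "(\<Sum>i<(8::nat). f i) = f 0 + f 1 + f 2 + f 3 + f 4 + f 5 + f 6 + f 7"
  by (simp add: numeral_eq_Suc One_nat_def)

lemma index_8_cases:
  fixes k :: 8
  obtains "k = 0" | "k = 1" | "k = 2" | "k = 3" | "k = 4" | "k = 5" | "k = 6" | "k = 7"
proof -
  have "k = 0 \<or> k = 1 \<or> k = 2 \<or> k = 3 \<or> k = 4 \<or> k = 5 \<or> k = 6 \<or> k = 7"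
  proof (induct k rule: bit0_induct)
    case (of_int z)
    then have "z = 0 \<or> z = 1 \<or> z = 2 \<or> z = 3 \<or> z = 4 \<or> z = 5 \<or> z = 6 \<or> z = 7"
      by simp presburger
    then show ?case by auto
  qed
  then show ?thesis using that by blast
qed

lemma oe_nth: "oe i $ k = (if k = of_nat i then 1 else 0)"
  by (simp add: oe_def axis_def)

lemma of_nat_8_eq_iff: "i < 8 \<Longrightarrow> j < 8 \<Longrightarrow> (of_nat i :: 8) = of_nat j \<longleftrightarrow> i = j"
  by (elim less_8_cases) simp_all

lemma oe_nth_0: "i < 8 \<Longrightarrow> oe i $ 0 = (if i = 0 then 1 else 0)"
  by (elim less_8_cases) (simp_all add: oe_nth)

lemma octo_eqI:
  assumes "\<And>k::8. k \<in> {0,1,2,3,4,5,6,7} \<Longrightarrow> p $ k = q $ k"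
  shows "(p::octo) = q"
proof (rule iffD2[OF vec_eq_iff], rule allI)
  fix k :: 8
  show "p $ k = q $ k" by (cases k rule: index_8_cases) (simp_all add: assms)
qed

lemma octo_expand: "p = (\<Sum>i<8. p $ of_nat i *\<^sub>R oe i)"
  by (rule octo_eqI) (auto simp: sum_lessThan_8 oe_nth)

lemma obasis_mult_table:
  "obasis_mult 1 1 = (-1, 0)" "obasis_mult 1 2 = (1, 4)" "obasis_mult 1 3 = (1, 7)" "obasis_mult 1 4 = (-1, 2)"
    "obasis_mult 1 5 = (1, 6)" "obasis_mult 1 6 = (-1, 5)" "obasis_mult 1 7 = (-1, 3)"
  "obasis_mult 2 1 = (-1, 4)" "obasis_mult 2 2 = (-1, 0)" "obasis_mult 2 3 = (1, 5)" "obasis_mult 2 4 = (1, 1)"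
    "obasis_mult 2 5 = (-1, 3)" "obasis_mult 2 6 = (1, 7)" "obasis_mult 2 7 = (-1, 6)"
  "obasis_mult 3 1 = (-1, 7)" "obasis_mult 3 2 = (-1, 5)" "obasis_mult 3 3 = (-1, 0)" "obasis_mult 3 4 = (1, 6)"
    "obasis_mult 3 5 = (1, 2)" "obasis_mult 3 6 = (-1, 4)" "obasis_mult 3 7 = (1, 1)"
  "obasis_mult 4 1 = (1, 2)" "obasis_mult 4 2 = (-1, 1)" "obasis_mult 4 3 = (-1, 6)" "obasis_mult 4 4 = (-1, 0)"
    "obasis_mult 4 5 = (1, 7)" "obasis_mult 4 6 = (1, 3)" "obasis_mult 4 7 = (-1, 5)"
  "obasis_mult 5 1 = (-1, 6)" "obasis_mult 5 2 = (1, 3)" "obasis_mult 5 3 = (-1, 2)" "obasis_mult 5 4 = (-1, 7)"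
    "obasis_mult 5 5 = (-1, 0)" "obasis_mult 5 6 = (1, 1)" "obasis_mult 5 7 = (1, 4)"
  "obasis_mult 6 1 = (1, 5)" "obasis_mult 6 2 = (-1, 7)" "obasis_mult 6 3 = (1, 4)" "obasis_mult 6 4 = (-1, 3)"
    "obasis_mult 6 5 = (-1, 1)" "obasis_mult 6 6 = (-1, 0)" "obasis_mult 6 7 = (1, 2)"
  "obasis_mult 7 1 = (1, 3)" "obasis_mult 7 2 = (1, 6)" "obasis_mult 7 3 = (-1, 1)" "obasis_mult 7 4 = (1, 5)"
    "obasis_mult 7 5 = (-1, 4)" "obasis_mult 7 6 = (-1, 2)" "obasis_mult 7 7 = (-1, 0)"
  by (simp_all add: obasis_mult_def oct_triples_def)

lemma obasis_mult_0: "obasis_mult 0 j = (1, j)" "obasis_mult i 0 = (1, i)"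
  by (simp_all add: obasis_mult_def)

lemma omult_nth: "(p \<cdot>\<^sub>O q) $ k = (\<Sum>i<8. \<Sum>j<8.
    if k = of_nat (snd (obasis_mult i j)) then p $ of_nat i * q $ of_nat j * fst (obasis_mult i j) else 0)"
  by (simp add: omult_def sum_component oe_nth if_distrib cong: if_cong)

lemma omult_components:
  "(p \<cdot>\<^sub>O q) $ 0 = p$0 * q$0 - p$1 * q$1 - p$2 * q$2 - p$3 * q$3 - p$4 * q$4 - p$5 * q$5 - p$6 * q$6 - p$7 * q$7"
  "(p \<cdot>\<^sub>O q) $ 1 = p$0 * q$1 + p$1 * q$0 + p$2 * q$4 + p$3 * q$7 - p$4 * q$2 + p$5 * q$6 - p$6 * q$5 - p$7 * q$3"
  "(p \<cdot>\<^sub>O q) $ 2 = p$0 * q$2 - p$1 * q$4 + p$2 * q$0 + p$3 * q$5 + p$4 * q$1 - p$5 * q$3 + p$6 * q$7 - p$7 * q$6"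
  "(p \<cdot>\<^sub>O q) $ 3 = p$0 * q$3 - p$1 * q$7 - p$2 * q$5 + p$3 * q$0 + p$4 * q$6 + p$5 * q$2 - p$6 * q$4 + p$7 * q$1"
  "(p \<cdot>\<^sub>O q) $ 4 = p$0 * q$4 + p$1 * q$2 - p$2 * q$1 - p$3 * q$6 + p$4 * q$0 + p$5 * q$7 + p$6 * q$3 - p$7 * q$5"
  "(p \<cdot>\<^sub>O q) $ 5 = p$0 * q$5 - p$1 * q$6 + p$2 * q$3 - p$3 * q$2 - p$4 * q$7 + p$5 * q$0 + p$6 * q$1 + p$7 * q$4"
  "(p \<cdot>\<^sub>O q) $ 6 = p$0 * q$6 + p$1 * q$5 - p$2 * q$7 + p$3 * q$4 - p$4 * q$3 - p$5 * q$1 + p$6 * q$0 + p$7 * q$2"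
  "(p \<cdot>\<^sub>O q) $ 7 = p$0 * q$7 + p$1 * q$3 + p$2 * q$6 - p$3 * q$1 + p$4 * q$5 - p$5 * q$4 - p$6 * q$2 + p$7 * q$0"
  unfolding omult_nth sum_lessThan_8
  by (simp_all only: obasis_mult_table obasis_mult_0 fst_conv snd_conv of_nat_numeral of_nat_0 of_nat_1)
    simp_all

lemma omult_add_left: "(p + q) \<cdot>\<^sub>O r = p \<cdot>\<^sub>O r + q \<cdot>\<^sub>O r"
  by (rule octo_eqI) (auto simp: omult_components algebra_simps)

lemma omult_add_right: "r \<cdot>\<^sub>O (p + q) = r \<cdot>\<^sub>O p + r \<cdot>\<^sub>O q"
  by (rule octo_eqI) (auto simp: omult_components algebra_simps)

lemma omult_scaleR_left: "(c *\<^sub>R p) \<cdot>\<^sub>O r = c *\<^sub>R (p \<cdot>\<^sub>O r)"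
  by (rule octo_eqI) (auto simp: omult_components algebra_simps)

lemma omult_scaleR_right: "r \<cdot>\<^sub>O (c *\<^sub>R p) = c *\<^sub>R (r \<cdot>\<^sub>O p)"
  by (rule octo_eqI) (auto simp: omult_components algebra_simps)

lemma omult_minus_right: "p \<cdot>\<^sub>O (- q) = - (p \<cdot>\<^sub>O q)"
  using omult_scaleR_right[of p "-1" q] by simp

lemma linear_omult_left: "linear (\<lambda>p. p \<cdot>\<^sub>O q)"
  by (rule linearI) (simp_all add: omult_add_left omult_scaleR_left)

lemma linear_omult_right: "linear (\<lambda>q. p \<cdot>\<^sub>O q)"
  by (rule linearI) (simp_all add: omult_add_right omult_scaleR_right)

lemma octo_linear_eqI:
  assumes "linear f" "linear g" "\<And>k. k < 8 \<Longrightarrow> f (oe k) = g (oe k)"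
  shows "f r = g r"
  by (subst (1 2) octo_expand[of r]) (simp add: linear_sum linear_scale assms)

lemma oe_mult_oe:
  assumes "i < 8" "j < 8"
  shows "oe i \<cdot>\<^sub>O oe j = fst (obasis_mult i j) *\<^sub>R oe (snd (obasis_mult i j))"
proof -
  have "oe i \<cdot>\<^sub>O oe j = (\<Sum>a<8. \<Sum>b<8. if b = j then (if a = i
      then fst (obasis_mult a b) *\<^sub>R oe (snd (obasis_mult a b)) else 0) else 0)"
    unfolding omult_def by (intro sum.cong refl) (auto simp: oe_nth of_nat_8_eq_iff assms)
  then show ?thesis
    using assms by simp
qed

lemma omult_expand: "p \<cdot>\<^sub>O q = (\<Sum>i<8. \<Sum>j<8. (p $ of_nat i * q $ of_nat j) *\<^sub>R (oe i \<cdot>\<^sub>O oe j))"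
proof -
  have "p \<cdot>\<^sub>O q = (\<Sum>i<8. p $ of_nat i *\<^sub>R oe i) \<cdot>\<^sub>O (\<Sum>j<8. q $ of_nat j *\<^sub>R oe j)"
    by (simp only: octo_expand[symmetric])
  then show ?thesis
    by (simp only: linear_sum[OF linear_omult_left])
      (simp add: linear_sum[OF linear_omult_right] omult_scaleR_left omult_scaleR_right scaleR_sum_right
        mult.commute)
qed

lemma oe_mult_self: "0 < i \<Longrightarrow> i < 8 \<Longrightarrow> oe i \<cdot>\<^sub>O oe i = - oe 0"
  by (simp add: oe_mult_oe obasis_mult_def)

lemma oe_mult_anticomm:
  assumes "0 < i" "i < 8" "0 < j" "j < 8" "i \<noteq> j"
  shows "oe i \<cdot>\<^sub>O oe j = - (oe j \<cdot>\<^sub>O oe i)"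
  using assms by (elim less_8_cases) (simp_all add: oe_mult_oe obasis_mult_table)

lemma oe_mult_oe_nth_0: "0 < j \<Longrightarrow> j < 8 \<Longrightarrow> i < 8 \<Longrightarrow> (oe j \<cdot>\<^sub>O oe i) $ 0 = (if i = j then -1 else 0)"
  by (elim less_8_cases) (simp_all add: omult_components oe_nth)

lemma re_omult_assoc: "((p \<cdot>\<^sub>O q) \<cdot>\<^sub>O r) $ 0 = (p \<cdot>\<^sub>O (q \<cdot>\<^sub>O r)) $ 0"
  by (simp add: omult_components algebra_simps)

lemma octo_re_proj:
  "(1/8) *\<^sub>R (r - oe 1 \<cdot>\<^sub>O (oe 2 \<cdot>\<^sub>O (oe 4 \<cdot>\<^sub>O r)) - oe 1 \<cdot>\<^sub>O (oe 3 \<cdot>\<^sub>O (oe 7 \<cdot>\<^sub>O r))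
     - oe 1 \<cdot>\<^sub>O (oe 5 \<cdot>\<^sub>O (oe 6 \<cdot>\<^sub>O r)) - oe 2 \<cdot>\<^sub>O (oe 3 \<cdot>\<^sub>O (oe 5 \<cdot>\<^sub>O r))
     - oe 2 \<cdot>\<^sub>O (oe 6 \<cdot>\<^sub>O (oe 7 \<cdot>\<^sub>O r)) - oe 3 \<cdot>\<^sub>O (oe 4 \<cdot>\<^sub>O (oe 6 \<cdot>\<^sub>O r))
     - oe 4 \<cdot>\<^sub>O (oe 5 \<cdot>\<^sub>O (oe 7 \<cdot>\<^sub>O r))) = r $ 0 *\<^sub>R oe 0"
  (is "?f r = _")
proof -
  have "linear ?f" "linear (\<lambda>r. r $ 0 *\<^sub>R oe 0)"
    by (auto intro!: linearI simp: omult_add_right omult_scaleR_right algebra_simps)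
  moreover have "?f (oe k) = oe k $ 0 *\<^sub>R oe 0" if "k < 8" for k
    using that by (elim less_8_cases)
      (simp_all add: oe_mult_oe obasis_mult_table obasis_mult_0 oe_nth omult_minus_right)
  ultimately show ?thesis
    by (rule octo_linear_eqI)
qed

definition fano_succ :: "nat \<Rightarrow> nat" where
  "fano_succ i = (if i = 0 then 0 else i mod 7 + 1)"

(* The shift e_i \<mapsto> e_(i+1) of the imaginary units (indices mod 7) permutes the quaternionic
   triples (i, i+1, i+3), so it is an algebra automorphism. *)
definition octo_rot :: "octo \<Rightarrow> octo" where
  "octo_rot p = (\<Sum>i<8. p $ of_nat i *\<^sub>R oe (fano_succ i))"

lemma octo_rot_components:
  "octo_rot p $ 0 = p $ 0" "octo_rot p $ 1 = p $ 7" "octo_rot p $ 2 = p $ 1" "octo_rot p $ 3 = p $ 2"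
  "octo_rot p $ 4 = p $ 3" "octo_rot p $ 5 = p $ 4" "octo_rot p $ 6 = p $ 5" "octo_rot p $ 7 = p $ 6"
  unfolding octo_rot_def sum_component sum_lessThan_8 vector_scaleR_component oe_nth
  by (simp_all only: fano_succ_def) (simp_all add: oe_nth)

lemma octo_rot_oe: "i < 8 \<Longrightarrow> octo_rot (oe i) = oe (fano_succ i)"
  by (erule less_8_cases) (rule octo_eqI; auto simp: octo_rot_components oe_nth fano_succ_def)+

lemma octo_rot_one: "octo_rot (oe 0) = oe 0"
  by (simp add: octo_rot_oe fano_succ_def)

lemma octo_rot_mult: "octo_rot (p \<cdot>\<^sub>O q) = octo_rot p \<cdot>\<^sub>O octo_rot q"
  by (rule octo_eqI) (auto simp: octo_rot_components omult_components)

lemma linear_octo_rot: "linear octo_rot"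
  by (rule linearI) (auto intro: octo_eqI simp: octo_rot_components)

lemma funpow_octo_rot:
  "linear (octo_rot ^^ k)"
  "(octo_rot ^^ k) (p \<cdot>\<^sub>O q) = (octo_rot ^^ k) p \<cdot>\<^sub>O (octo_rot ^^ k) q"
  "(octo_rot ^^ k) (oe 0) = oe 0"
  by (induction k) (simp_all add: linear_id linear_compose[OF _ linear_octo_rot] octo_rot_mult octo_rot_one)

lemma funpow_octo_rot_oe_1: "(octo_rot ^^ k) (oe 1) = oe (k mod 7 + 1)"
proof (induction k)
  case (Suc k)
  have "(octo_rot ^^ Suc k) (oe 1) = octo_rot (oe (k mod 7 + 1))"
    using Suc.IH by simp
  also have "\<dots> = oe (Suc k mod 7 + 1)"
    by (simp add: octo_rot_oe fano_succ_def mod_Suc One_nat_def)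
  finally show ?case .
qed simp

section \<open>Left multiplications in an octonionic bimodule\<close>

lemma eq_if_functionals_eq:
  fixes u v :: "'a::real_vector"
  assumes "\<And>f::'a \<Rightarrow> real. linear f \<Longrightarrow> f u = f v"
  shows "u = v"
proof (rule ccontr)
  assume "u \<noteq> v"
  then have "independent {u - v}"
    by (intro independent_insertI independent_empty) simp
  then obtain g :: "'a \<Rightarrow> real" where g: "linear g" "g (u - v) = 1"
    using linear_independent_extend[of "{u - v}" "\<lambda>_. 1"] by auto
  with assms[OF g(1)] show False
    by (simp add: linear_diff)
qed

locale octo_bimodule =
  fixes lm :: "octo \<Rightarrow> 'v::real_vector \<Rightarrow> 'v" and rm :: "'v \<Rightarrow> octo \<Rightarrow> 'v"
  assumes O_bimodule: "O_bimodule lm rm"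
begin

lemma linear_lm: "linear (lm p)"
  and linear_lm_octo: "linear (\<lambda>p. lm p x)"
  and linear_rm: "linear (\<lambda>x. rm x p)"
  and linear_rm_octo: "linear (rm x)"
  using O_bimodule unfolding O_bimodule_def by blast+

lemmas lm_linear = linear_add[OF linear_lm] linear_diff[OF linear_lm] linear_neg[OF linear_lm]
  linear_scale[OF linear_lm] linear_0[OF linear_lm] linear_sum[OF linear_lm]
lemmas lm_octo_linear = linear_add[OF linear_lm_octo] linear_diff[OF linear_lm_octo]
  linear_neg[OF linear_lm_octo] linear_scale[OF linear_lm_octo] linear_0[OF linear_lm_octo]
  linear_sum[OF linear_lm_octo]
lemmas rm_linear = linear_add[OF linear_rm] linear_diff[OF linear_rm] linear_neg[OF linear_rm]
  linear_scale[OF linear_rm] linear_0[OF linear_rm] linear_sum[OF linear_rm]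
lemmas rm_octo_linear = linear_add[OF linear_rm_octo] linear_diff[OF linear_rm_octo]
  linear_neg[OF linear_rm_octo] linear_scale[OF linear_rm_octo] linear_0[OF linear_rm_octo]
  linear_sum[OF linear_rm_octo]

lemma lm_one [simp]: "lm (oe 0) x = x"
  and rm_one [simp]: "rm x (oe 0) = x"
  using O_bimodule unfolding O_bimodule_def by blast+

lemma lm_expand: "lm p x = (\<Sum>i<8. p $ of_nat i *\<^sub>R lm (oe i) x)"
proof -
  have "lm p x = lm (\<Sum>i<8. p $ of_nat i *\<^sub>R oe i) x"
    by (simp only: octo_expand[symmetric])
  then show ?thesis
    by (simp add: lm_octo_linear)
qed

lemma rm_expand: "rm x p = (\<Sum>i<8. p $ of_nat i *\<^sub>R rm x (oe i))"
proof -
  have "rm x p = rm x (\<Sum>i<8. p $ of_nat i *\<^sub>R oe i)"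
    by (simp only: octo_expand[symmetric])
  then show ?thesis
    by (simp add: rm_octo_linear)
qed

lemma assoc_identities:
  "assocL lm p q x = - assocL lm q p x"
  "assocM lm rm q x p = assocL lm p q x"
  "assocR rm x p q = assocL lm p q x"
  using O_bimodule unfolding O_bimodule_def by metis+

lemma lm_lm_self: "lm p (lm p x) = lm (p \<cdot>\<^sub>O p) x"
proof -
  have "2 *\<^sub>R assocL lm p p x = 0"
    using assoc_identities(1)[of p p x] by (simp add: scaleR_2 eq_neg_iff_add_eq_0)
  then show ?thesis by (simp add: assocL_def)
qed

lemma lm_lm_anticomm: "lm p (lm q x) + lm q (lm p x) = lm (p \<cdot>\<^sub>O q) x + lm (q \<cdot>\<^sub>O p) x"
  using assoc_identities(1)[of p q x] by (simp add: assocL_def algebra_simps)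

lemma rm_lm: "rm (lm q x) p = lm q (rm x p) + lm (p \<cdot>\<^sub>O q) x - lm p (lm q x)"
  using assoc_identities(2)[of q x p] by (simp add: assocL_def assocM_def algebra_simps)

lemma rm_rm: "rm (rm x p) q = lm (p \<cdot>\<^sub>O q) x - lm p (lm q x) + rm x (p \<cdot>\<^sub>O q)"
  using assoc_identities(3)[of x p q] by (simp add: assocL_def assocR_def algebra_simps)

lemma rm_rm_self: "rm (rm x p) p = rm x (p \<cdot>\<^sub>O p)"
  by (simp add: rm_rm lm_lm_self)

lemma lm_oe_self: "0 < i \<Longrightarrow> i < 8 \<Longrightarrow> lm (oe i) (lm (oe i) x) = - x"
  by (simp add: lm_lm_self oe_mult_self lm_octo_linear)

lemma lm_oe_swap:
  "0 < i \<Longrightarrow> i < j \<Longrightarrow> j < 8 \<Longrightarrow> lm (oe j) (lm (oe i) x) = - lm (oe i) (lm (oe j) x)"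
  using lm_lm_anticomm[of "oe i" "oe j" x]
  by (simp add: oe_mult_anticomm[of i j] lm_octo_linear eq_neg_iff_add_eq_0 add.commute)

lemmas clifford_normalize = lm_oe_self lm_oe_swap lm_linear lm_octo_linear

(* The two ways of expanding ((q x) p) r and ((x p) q) r with rm_lm and rm_rm. Their
   disagreement is what ties right multiplication to left multiplication. *)
lemma rm_lm_critical_pair:
  "rm (lm q (rm x p) + lm (p \<cdot>\<^sub>O q) x - lm p (lm q x)) r
     = lm (p \<cdot>\<^sub>O r) (lm q x) - lm p (lm r (lm q x)) + rm (lm q x) (p \<cdot>\<^sub>O r)"
  using rm_rm[of "lm q x" p r] by (simp only: rm_lm[of q x p])

lemma rm_rm_critical_pair:
  "rm (lm (p \<cdot>\<^sub>O q) x - lm p (lm q x) + rm x (p \<cdot>\<^sub>O q)) r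
     = lm (q \<cdot>\<^sub>O r) (rm x p) - lm q (lm r (rm x p)) + rm (rm x p) (q \<cdot>\<^sub>O r)"
  using rm_rm[of "rm x p" q r] by (simp only: rm_rm[of x p q])

lemmas bimodule_normalize = clifford_normalize rm_lm rm_rm rm_linear rm_octo_linear
  oe_mult_oe obasis_mult_table obasis_mult_0

lemma rm_oe_1:
  "rm y (oe 1) = (1/2) *\<^sub>R (lm (oe 2) (lm (oe 4) y) + lm (oe 3) (lm (oe 7) y)
     + lm (oe 5) (lm (oe 6) y) - lm (oe 1) y)"
proof (rule eq_if_functionals_eq)
  \<comment> \<open>Testing against linear functionals turns the linear combination into real arithmetic.\<close>
  fix f :: "'v \<Rightarrow> real"
  assume f: "linear f"
  from arg_cong[where f = f, OF rm_lm_critical_pair[where q = "oe 3" and x = y and p = "oe 6"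
      and r = "oe 2"]]
    arg_cong[where f = f, OF rm_rm_critical_pair[where x = y and p = "oe 6" and q = "oe 3"
      and r = "oe 2"]]
  show "f (rm y (oe 1)) = f ((1/2) *\<^sub>R (lm (oe 2) (lm (oe 4) y) + lm (oe 3) (lm (oe 7) y)
     + lm (oe 5) (lm (oe 6) y) - lm (oe 1) y))"
    by (simp add: bimodule_normalize linear_add[OF f] linear_diff[OF f] linear_neg[OF f]
        linear_scale[OF f])
qed

(* With E the right-hand side of rm_oe_1 and Z = L_1 (L_2 L_4 + L_3 L_7 + L_5 L_6), the identity
   E (E v) = R_1 (R_1 v) = -v says (1 + \<omega>) Z = 0 for the volume element \<omega>. Since Z^2 = 3 + 2 \<omega> Z,
   taking v = y and v = Z y gives 3 (1 + \<omega>) y = 0. *)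
lemma lm_volume_element:
  "lm (oe 1) (lm (oe 2) (lm (oe 3) (lm (oe 4) (lm (oe 5) (lm (oe 6) (lm (oe 7) y)))))) = - y"
proof (rule eq_if_functionals_eq)
  fix f :: "'v \<Rightarrow> real"
  assume f: "linear f"
  have "f (rm (rm v (oe 1)) (oe 1)) = - f v" for v
    by (simp add: rm_rm_self oe_mult_self rm_octo_linear linear_neg[OF f])
  from this[of y] this[of "lm (oe 1) (lm (oe 2) (lm (oe 4) y)) + lm (oe 1) (lm (oe 3) (lm (oe 7) y))
      + lm (oe 1) (lm (oe 5) (lm (oe 6) y))"]
  show "f (lm (oe 1) (lm (oe 2) (lm (oe 3) (lm (oe 4) (lm (oe 5) (lm (oe 6) (lm (oe 7) y))))))) = f (- y)"
    by (simp add: rm_oe_1 rm_linear clifford_normalize linear_add[OF f] linear_diff[OF f]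
        linear_neg[OF f] linear_scale[OF f]) (simp add: field_simps)
qed

lemma lm_four_product_insert_volume:
  "lm p (lm q (lm r (lm s z)))
     = - lm p (lm q (lm r (lm s (lm (oe 1) (lm (oe 2) (lm (oe 3) (lm (oe 4) (lm (oe 5) (lm (oe 6) (lm (oe 7) z))))))))))"
  by (simp add: lm_volume_element lm_linear)

lemma lm_four_products:
  "lm (oe 1) (lm (oe 2) (lm (oe 3) (lm (oe 4) z))) = - lm (oe 5) (lm (oe 6) (lm (oe 7) z))"
  "lm (oe 1) (lm (oe 2) (lm (oe 3) (lm (oe 5) z))) = lm (oe 4) (lm (oe 6) (lm (oe 7) z))"
  "lm (oe 1) (lm (oe 2) (lm (oe 3) (lm (oe 6) z))) = - lm (oe 4) (lm (oe 5) (lm (oe 7) z))"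
  "lm (oe 1) (lm (oe 2) (lm (oe 3) (lm (oe 7) z))) = lm (oe 4) (lm (oe 5) (lm (oe 6) z))"
  "lm (oe 1) (lm (oe 2) (lm (oe 4) (lm (oe 5) z))) = - lm (oe 3) (lm (oe 6) (lm (oe 7) z))"
  "lm (oe 1) (lm (oe 2) (lm (oe 4) (lm (oe 6) z))) = lm (oe 3) (lm (oe 5) (lm (oe 7) z))"
  "lm (oe 1) (lm (oe 2) (lm (oe 4) (lm (oe 7) z))) = - lm (oe 3) (lm (oe 5) (lm (oe 6) z))"
  "lm (oe 1) (lm (oe 2) (lm (oe 5) (lm (oe 6) z))) = - lm (oe 3) (lm (oe 4) (lm (oe 7) z))"
  "lm (oe 1) (lm (oe 2) (lm (oe 5) (lm (oe 7) z))) = lm (oe 3) (lm (oe 4) (lm (oe 6) z))"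
  "lm (oe 1) (lm (oe 2) (lm (oe 6) (lm (oe 7) z))) = - lm (oe 3) (lm (oe 4) (lm (oe 5) z))"
  "lm (oe 1) (lm (oe 3) (lm (oe 4) (lm (oe 5) z))) = lm (oe 2) (lm (oe 6) (lm (oe 7) z))"
  "lm (oe 1) (lm (oe 3) (lm (oe 4) (lm (oe 6) z))) = - lm (oe 2) (lm (oe 5) (lm (oe 7) z))"
  "lm (oe 1) (lm (oe 3) (lm (oe 4) (lm (oe 7) z))) = lm (oe 2) (lm (oe 5) (lm (oe 6) z))"
  "lm (oe 1) (lm (oe 3) (lm (oe 5) (lm (oe 6) z))) = lm (oe 2) (lm (oe 4) (lm (oe 7) z))"
  "lm (oe 1) (lm (oe 3) (lm (oe 5) (lm (oe 7) z))) = - lm (oe 2) (lm (oe 4) (lm (oe 6) z))"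
  "lm (oe 1) (lm (oe 3) (lm (oe 6) (lm (oe 7) z))) = lm (oe 2) (lm (oe 4) (lm (oe 5) z))"
  "lm (oe 1) (lm (oe 4) (lm (oe 5) (lm (oe 6) z))) = - lm (oe 2) (lm (oe 3) (lm (oe 7) z))"
  "lm (oe 1) (lm (oe 4) (lm (oe 5) (lm (oe 7) z))) = lm (oe 2) (lm (oe 3) (lm (oe 6) z))"
  "lm (oe 1) (lm (oe 4) (lm (oe 6) (lm (oe 7) z))) = - lm (oe 2) (lm (oe 3) (lm (oe 5) z))"
  "lm (oe 1) (lm (oe 5) (lm (oe 6) (lm (oe 7) z))) = lm (oe 2) (lm (oe 3) (lm (oe 4) z))"
  "lm (oe 2) (lm (oe 3) (lm (oe 4) (lm (oe 5) z))) = - lm (oe 1) (lm (oe 6) (lm (oe 7) z))"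
  "lm (oe 2) (lm (oe 3) (lm (oe 4) (lm (oe 6) z))) = lm (oe 1) (lm (oe 5) (lm (oe 7) z))"
  "lm (oe 2) (lm (oe 3) (lm (oe 4) (lm (oe 7) z))) = - lm (oe 1) (lm (oe 5) (lm (oe 6) z))"
  "lm (oe 2) (lm (oe 3) (lm (oe 5) (lm (oe 6) z))) = - lm (oe 1) (lm (oe 4) (lm (oe 7) z))"
  "lm (oe 2) (lm (oe 3) (lm (oe 5) (lm (oe 7) z))) = lm (oe 1) (lm (oe 4) (lm (oe 6) z))"
  "lm (oe 2) (lm (oe 3) (lm (oe 6) (lm (oe 7) z))) = - lm (oe 1) (lm (oe 4) (lm (oe 5) z))"
  "lm (oe 2) (lm (oe 4) (lm (oe 5) (lm (oe 6) z))) = lm (oe 1) (lm (oe 3) (lm (oe 7) z))"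
  "lm (oe 2) (lm (oe 4) (lm (oe 5) (lm (oe 7) z))) = - lm (oe 1) (lm (oe 3) (lm (oe 6) z))"
  "lm (oe 2) (lm (oe 4) (lm (oe 6) (lm (oe 7) z))) = lm (oe 1) (lm (oe 3) (lm (oe 5) z))"
  "lm (oe 2) (lm (oe 5) (lm (oe 6) (lm (oe 7) z))) = - lm (oe 1) (lm (oe 3) (lm (oe 4) z))"
  "lm (oe 3) (lm (oe 4) (lm (oe 5) (lm (oe 6) z))) = - lm (oe 1) (lm (oe 2) (lm (oe 7) z))"
  "lm (oe 3) (lm (oe 4) (lm (oe 5) (lm (oe 7) z))) = lm (oe 1) (lm (oe 2) (lm (oe 6) z))"
  "lm (oe 3) (lm (oe 4) (lm (oe 6) (lm (oe 7) z))) = - lm (oe 1) (lm (oe 2) (lm (oe 5) z))"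
  "lm (oe 3) (lm (oe 5) (lm (oe 6) (lm (oe 7) z))) = lm (oe 1) (lm (oe 2) (lm (oe 4) z))"
  "lm (oe 4) (lm (oe 5) (lm (oe 6) (lm (oe 7) z))) = - lm (oe 1) (lm (oe 2) (lm (oe 3) z))"
  by (subst lm_four_product_insert_volume, simp add: clifford_normalize)+

lemma O_bimodule_twist:
  assumes "linear \<phi>" "\<And>p q. \<phi> (p \<cdot>\<^sub>O q) = \<phi> p \<cdot>\<^sub>O \<phi> q" "\<phi> (oe 0) = oe 0"
  shows "O_bimodule (\<lambda>p. lm (\<phi> p)) (\<lambda>x p. rm x (\<phi> p))"
  using O_bimodule assms(1) unfolding O_bimodule_def assocL_def assocM_def assocR_def assms(2,3)
  by (auto intro: linear_compose[OF assms(1), unfolded o_def])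

lemma rm_automorphism_oe_1:
  assumes "linear \<phi>" "\<And>p q. \<phi> (p \<cdot>\<^sub>O q) = \<phi> p \<cdot>\<^sub>O \<phi> q" "\<phi> (oe 0) = oe 0"
  shows "rm y (\<phi> (oe 1)) = (1/2) *\<^sub>R (lm (\<phi> (oe 2)) (lm (\<phi> (oe 4)) y)
    + lm (\<phi> (oe 3)) (lm (\<phi> (oe 7)) y) + lm (\<phi> (oe 5)) (lm (\<phi> (oe 6)) y) - lm (\<phi> (oe 1)) y)"
proof -
  interpret twisted: octo_bimodule "\<lambda>p. lm (\<phi> p)" "\<lambda>x p. rm x (\<phi> p)"
    using O_bimodule_twist[OF assms] by unfold_locales
  show ?thesis by (rule twisted.rm_oe_1)
qed

section \<open>The real part\<close>

lemma mem_ReM_iff: "m \<in> ReM lm rm \<longleftrightarrow> (\<forall>p. rm m p = lm p m) \<and> (\<forall>p q. lm (p \<cdot>\<^sub>O q) m = lm p (lm q m))"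
  by (auto simp: ReM_def assocL_def)

(* Each e_i, i > 0, is the image of e_1 under a power of octo_rot, and rm_oe_1 in the twisted
   bimodule turns left associativity into R_i m = L_i m. *)
lemma ReM_if_lm_assoc:
  assumes assoc: "\<And>p q. lm (p \<cdot>\<^sub>O q) m = lm p (lm q m)"
  shows "m \<in> ReM lm rm"
proof -
  have "rm m (oe i) = lm (oe i) m" if "i < 8" for i
  proof (cases "i = 0")
    case False
    define \<phi> where "\<phi> = octo_rot ^^ (i - 1)"
    have i: "\<phi> (oe 1) = oe i"
      using that False by (simp add: \<phi>_def funpow_octo_rot_oe_1)
    have "lm (\<phi> p) (lm (\<phi> q) m) = lm (\<phi> (p \<cdot>\<^sub>O q)) m" for p q
      by (simp add: assoc \<phi>_def funpow_octo_rot)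
    then have "rm m (\<phi> (oe 1)) = lm (\<phi> (oe 1)) m"
      unfolding \<phi>_def rm_automorphism_oe_1[OF funpow_octo_rot]
      by (simp add: oe_mult_oe obasis_mult_table scaleR_add_right flip: scaleR_add_left)
    then show ?thesis by (simp add: i)
  qed simp
  then have "rm m p = lm p m" for p
    by (simp add: lm_expand[of p] rm_expand[of _ p])
  with assoc show ?thesis by (simp add: mem_ReM_iff)
qed

lemma ReMD:
  assumes "m \<in> ReM lm rm"
  shows "rm m p = lm p m" "lm (p \<cdot>\<^sub>O q) m = lm p (lm q m)"
  using assms by (simp_all add: mem_ReM_iff)

lemma lm_assoc_if_basis:
  assumes basis: "\<And>i j. i < 8 \<Longrightarrow> j < 8 \<Longrightarrow> lm (oe i \<cdot>\<^sub>O oe j) m = lm (oe i) (lm (oe j) m)"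
  shows "lm (p \<cdot>\<^sub>O q) m = lm p (lm q m)"
proof -
  have "lm (p \<cdot>\<^sub>O q) m = (\<Sum>i<8. \<Sum>j<8. (p $ of_nat i * q $ of_nat j) *\<^sub>R lm (oe i \<cdot>\<^sub>O oe j) m)"
    by (simp add: omult_expand[of p q] lm_octo_linear)
  also have "\<dots> = (\<Sum>i<8. \<Sum>j<8. (p $ of_nat i * q $ of_nat j) *\<^sub>R lm (oe i) (lm (oe j) m))"
    by (intro sum.cong refl) (simp add: basis)
  also have "\<dots> = lm p (lm q m)"
    by (subst sum.swap) (simp add: lm_expand[of p] lm_expand[of q] lm_linear scaleR_sum_right mult.commute)
  finally show ?thesis .
qed

(* The seven triples are the Fano lines e_a e_b = e_c; on O itself this map is the real part
   (octo_re_proj). *)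
definition re_proj :: "'v \<Rightarrow> 'v" where
  "re_proj y = (1/8) *\<^sub>R (y - lm (oe 1) (lm (oe 2) (lm (oe 4) y)) - lm (oe 1) (lm (oe 3) (lm (oe 7) y))
     - lm (oe 1) (lm (oe 5) (lm (oe 6) y)) - lm (oe 2) (lm (oe 3) (lm (oe 5) y))
     - lm (oe 2) (lm (oe 6) (lm (oe 7) y)) - lm (oe 3) (lm (oe 4) (lm (oe 6) y))
     - lm (oe 4) (lm (oe 5) (lm (oe 7) y)))"

lemma linear_re_proj: "linear re_proj"
  by (rule linearI) (simp_all add: re_proj_def lm_linear algebra_simps)

lemma re_proj_ReM: "re_proj y \<in> ReM lm rm"
proof (rule ReM_if_lm_assoc, rule lm_assoc_if_basis)
  fix i j :: nat
  assume "i < 8" "j < 8"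
  then show "lm (oe i \<cdot>\<^sub>O oe j) (re_proj y) = lm (oe i) (lm (oe j) (re_proj y))"
    by (elim less_8_cases) (simp_all add: re_proj_def oe_mult_oe obasis_mult_table obasis_mult_0
        clifford_normalize lm_four_products)
qed

lemma re_proj_lm_ReM:
  assumes "m \<in> ReM lm rm"
  shows "re_proj (lm r m) = r $ 0 *\<^sub>R m"
proof -
  have "r $ 0 *\<^sub>R m = lm (r $ 0 *\<^sub>R oe 0) m"
    by (simp add: lm_octo_linear)
  then show ?thesis
    unfolding octo_re_proj[symmetric] by (simp add: re_proj_def ReMD(2)[OF assms] lm_octo_linear)
qed

definition re_coord :: "'v \<Rightarrow> nat \<Rightarrow> 'v" where
  "re_coord y i = (if i = 0 then re_proj y else if i < 8 then - re_proj (lm (oe i) y) else 0)"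

lemma ReM_subspace: "subspace (ReM lm rm)"
  by (auto simp: subspace_def mem_ReM_iff lm_linear rm_linear)

lemma re_coord_ReM: "re_coord y i \<in> ReM lm rm"
  using ReM_subspace by (simp add: re_coord_def re_proj_ReM subspace_0 subspace_neg)

lemma sum_lm_re_coord: "(\<Sum>i<8. lm (oe i) (re_coord y i)) = y"
  by (simp add: sum_lessThan_8 re_coord_def re_proj_def clifford_normalize lm_four_products algebra_simps)
    (simp flip: scaleR_add_left)

lemma re_coord_sum_lm:
  assumes c: "\<And>i. i < 8 \<Longrightarrow> c i \<in> ReM lm rm" and "j < 8"
  shows "re_coord (\<Sum>i<8. lm (oe i) (c i)) j = c j"
proof (cases "j = 0")
  case True
  have "re_proj (\<Sum>i<8. lm (oe i) (c i)) = (\<Sum>i<8. oe i $ 0 *\<^sub>R c i)"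
    by (simp add: linear_sum[OF linear_re_proj] re_proj_lm_ReM c)
  with True show ?thesis
    by (simp add: re_coord_def oe_nth_0 if_distrib[of "\<lambda>a. a *\<^sub>R _"] cong: if_cong)
next
  case False
  have "re_coord (\<Sum>i<8. lm (oe i) (c i)) j = - (\<Sum>i<8. re_proj (lm (oe j) (lm (oe i) (c i))))"
    using False \<open>j < 8\<close> by (simp add: re_coord_def lm_linear linear_sum[OF linear_re_proj])
  also have "\<dots> = - (\<Sum>i<8. (oe j \<cdot>\<^sub>O oe i) $ 0 *\<^sub>R c i)"
    by (intro arg_cong[where f = uminus] sum.cong) (simp_all add: ReMD(2)[OF c, symmetric] re_proj_lm_ReM c)
  also have "\<dots> = c j"
    using False \<open>j < 8\<close> by (simp add: oe_mult_oe_nth_0 if_distrib[of "\<lambda>a. a *\<^sub>R _"] cong: if_cong)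
  finally show ?thesis .
qed

lemma rcomp_eq_re_coord: "rcomp lm rm x = re_coord x"
  unfolding rcomp_def
proof (rule the_equality)
  have "x = (\<Sum>i<8. rm (re_coord x i) (oe i))"
    by (simp add: ReMD(1)[OF re_coord_ReM] sum_lm_re_coord)
  moreover have "\<forall>i\<ge>8. re_coord x i = 0"
    by (simp add: re_coord_def)
  ultimately show "(\<forall>i<8. re_coord x i \<in> ReM lm rm) \<and> (\<forall>i\<ge>8. re_coord x i = 0)
      \<and> x = (\<Sum>i<8. rm (re_coord x i) (oe i))"
    using re_coord_ReM by blast
next
  fix c
  assume c: "(\<forall>i<8. c i \<in> ReM lm rm) \<and> (\<forall>i\<ge>8. c i = 0) \<and> x = (\<Sum>i<8. rm (c i) (oe i))"
  then have x: "x = (\<Sum>i<8. lm (oe i) (c i))"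
    by (simp add: ReMD(1))
  show "c = re_coord x"
  proof
    fix i
    show "c i = re_coord x i"
      using c re_coord_sum_lm[of c i] by (cases "i < 8") (simp_all add: x re_coord_def)
  qed
qed

lemma RePart_eq_re_proj: "RePart lm rm x = re_proj x"
  by (simp add: RePart_def rcomp_eq_re_coord re_coord_def)

lemma rcomp_ReM: "rcomp lm rm x i \<in> ReM lm rm"
  by (simp add: rcomp_eq_re_coord re_coord_ReM)

lemma rcomp_decomposition: "x = (\<Sum>i<8. rm (rcomp lm rm x i) (oe i))"
  by (simp add: rcomp_eq_re_coord ReMD(1)[OF re_coord_ReM] sum_lm_re_coord)

lemma ReM_rm_rm: "m \<in> ReM lm rm \<Longrightarrow> rm (rm m p) q = rm m (p \<cdot>\<^sub>O q)"
  unfolding rm_rm by (simp add: ReMD)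

lemma ReM_lm_rm: "m \<in> ReM lm rm \<Longrightarrow> lm p (rm m q) = rm m (p \<cdot>\<^sub>O q)"
  by (simp add: ReMD)

lemma ReM_if_rm_assoc:
  assumes "\<And>p q. rm (rm m p) q = rm m (p \<cdot>\<^sub>O q)"
  shows "m \<in> ReM lm rm"
  by (rule ReM_if_lm_assoc) (use rm_rm assms in auto)

lemma re_proj_rm_ReM: "m \<in> ReM lm rm \<Longrightarrow> re_proj (rm m r) = r $ 0 *\<^sub>R m"
  by (simp add: ReMD(1) re_proj_lm_ReM)

lemma re_proj_assocM: "re_proj (assocM lm rm q x p) = 0"
proof -
  let ?c = "rcomp lm rm x"
  have "assocM lm rm q x p = assocM lm rm q (\<Sum>i<8. rm (?c i) (oe i)) p"
    by (simp only: rcomp_decomposition[symmetric])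
  also have "\<dots> = (\<Sum>i<8. rm (?c i) ((q \<cdot>\<^sub>O oe i) \<cdot>\<^sub>O p) - rm (?c i) (q \<cdot>\<^sub>O (oe i \<cdot>\<^sub>O p)))"
    by (simp add: assocM_def lm_linear rm_linear sum_subtractf ReM_lm_rm ReM_rm_rm rcomp_ReM)
  finally show ?thesis
    by (simp add: linear_sum[OF linear_re_proj] linear_diff[OF linear_re_proj] re_proj_rm_ReM
        rcomp_ReM re_omult_assoc)
qed

section \<open>The operators T0 + J T1\<close>

(* B_O without boundedness, which is only needed for B_RO and is tracked separately. *)
definition O_linear :: "('v \<Rightarrow> 'v) \<Rightarrow> bool" where
  "O_linear A \<longleftrightarrow> linear A \<and> (\<forall>x p. A (rm x p) = rm (A x) p)"

lemma O_linear_ReM: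
  assumes "O_linear A" "m \<in> ReM lm rm"
  shows "A m \<in> ReM lm rm"
  using assms by (intro ReM_if_rm_assoc) (metis O_linear_def ReM_rm_rm)

lemma O_linear_lm:
  assumes A: "O_linear A"
  shows "A (lm p x) = lm p (A x)"
proof -
  let ?c = "rcomp lm rm x"
  have lin: "linear A" and rm: "\<And>x p. A (rm x p) = rm (A x) p"
    using A by (simp_all add: O_linear_def)
  have "A (lm p x) = A (lm p (\<Sum>i<8. rm (?c i) (oe i)))"
    by (simp only: rcomp_decomposition[symmetric])
  also have "\<dots> = (\<Sum>i<8. rm (A (?c i)) (p \<cdot>\<^sub>O oe i))"
    by (simp add: lm_linear linear_sum[OF lin] ReM_lm_rm rcomp_ReM rm)
  also have "\<dots> = lm p (A (\<Sum>i<8. rm (?c i) (oe i)))"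
    by (simp add: lm_linear linear_sum[OF lin] ReM_lm_rm O_linear_ReM[OF A rcomp_ReM] rm)
  finally show ?thesis
    by (simp only: rcomp_decomposition[symmetric])
qed

lemma O_linear_comp: "O_linear A \<Longrightarrow> O_linear B \<Longrightarrow> O_linear (\<lambda>x. A (B x))"
  by (simp add: O_linear_def linear_compose[unfolded o_def])

lemma O_linear_add: "O_linear A \<Longrightarrow> O_linear B \<Longrightarrow> O_linear (\<lambda>x. A x + B x)"
  by (simp add: O_linear_def linear_compose_add rm_linear)

lemma O_linear_diff: "O_linear A \<Longrightarrow> O_linear B \<Longrightarrow> O_linear (\<lambda>x. A x - B x)"
  by (simp add: O_linear_def linear_compose_sub rm_linear)

(* For T1 in B_O the term B_J(T1, x) vanishes, so odot lm rm J T1 is x \<mapsto> J T1(x). *)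
definition slice_operators :: "octo \<Rightarrow> ('v \<Rightarrow> 'v) set" where
  "slice_operators J = {\<lambda>x. A x + lm J (B x) | A B. O_linear A \<and> O_linear B}"

lemma slice_operatorsI: "O_linear A \<Longrightarrow> O_linear B \<Longrightarrow> (\<lambda>x. A x + lm J (B x)) \<in> slice_operators J"
  unfolding slice_operators_def by blast

lemma slice_operatorsE:
  assumes "F \<in> slice_operators J"
  obtains A B where "O_linear A" "O_linear B" "F = (\<lambda>x. A x + lm J (B x))"
  using assms unfolding slice_operators_def by blast

lemma id_slice_operators: "(\<lambda>x. x) \<in> slice_operators J"
  using slice_operatorsI[of "\<lambda>x. x" "\<lambda>x. 0" J]
  by (simp add: O_linear_def linear_id[unfolded id_def] linear_zero rm_linear lm_linear)

lemma comp_slice_operators: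
  assumes J: "J \<cdot>\<^sub>O J = - oe 0" and "F \<in> slice_operators J" "G \<in> slice_operators J"
  shows "F \<circ> G \<in> slice_operators J"
proof -
  obtain A B where A: "O_linear A" and B: "O_linear B" and F: "F = (\<lambda>x. A x + lm J (B x))"
    using assms(2) by (rule slice_operatorsE)
  obtain C D where C: "O_linear C" and D: "O_linear D" and G: "G = (\<lambda>x. C x + lm J (D x))"
    using assms(3) by (rule slice_operatorsE)
  have lin: "linear A" "linear B"
    using A B by (simp_all add: O_linear_def)
  have "F \<circ> G = (\<lambda>x. (A (C x) - B (D x)) + lm J (A (D x) + B (C x)))"
    by (rule ext) (simp add: F G linear_add[OF lin(1)] linear_add[OF lin(2)] O_linear_lm A B
        lm_lm_self J lm_octo_linear lm_linear)
  moreover have "O_linear (\<lambda>x. A (C x) - B (D x))" "O_linear (\<lambda>x. A (D x) + B (C x))"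
    by (simp_all add: O_linear_diff O_linear_add O_linear_comp A B C D)
  ultimately show ?thesis
    by (simp add: slice_operatorsI)
qed

lemma funpow_slice_operators:
  assumes "J \<cdot>\<^sub>O J = - oe 0" "F \<in> slice_operators J"
  shows "F ^^ n \<in> slice_operators J"
proof (induction n)
  case 0
  show ?case using id_slice_operators by (simp add: id_def)
next
  case (Suc n)
  show ?case using comp_slice_operators[OF assms Suc.IH] by (simp only: funpow.simps(2))
qed

lemma slice_operators_rm_ReM:
  assumes "F \<in> slice_operators J" "m \<in> ReM lm rm"
  shows "F (rm m r) = rm (F m) r"
proof -
  obtain A B where A: "O_linear A" and B: "O_linear B" and F: "F = (\<lambda>x. A x + lm J (B x))"
    using assms(1) by (rule slice_operatorsE)
  have Bm: "B m \<in> ReM lm rm"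
    by (rule O_linear_ReM[OF B assms(2)])
  show ?thesis
    using A B by (simp add: F O_linear_def rm_linear ReM_lm_rm[OF Bm] ReMD(1)[OF Bm, symmetric]
        ReM_rm_rm[OF Bm])
qed

lemma oext_slice_operators:
  assumes "F \<in> slice_operators J"
  shows "oext lm rm F = F"
proof
  fix x
  obtain A B where "O_linear A" "O_linear B" "F = (\<lambda>x. A x + lm J (B x))"
    using assms by (rule slice_operatorsE)
  then have lin: "linear F"
    by (simp add: O_linear_def linear_compose_add linear_compose[OF _ linear_lm, unfolded o_def])
  have "oext lm rm F x = F (\<Sum>i<8. rm (rcomp lm rm x i) (oe i))"
    by (simp add: oext_def linear_sum[OF lin] slice_operators_rm_ReM[OF assms] rcomp_ReM)
  then show "oext lm rm F x = F x"
    by (simp flip: rcomp_decomposition)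
qed

lemma RePart_Bp_slice_operators:
  assumes "F \<in> slice_operators J"
  shows "RePart lm rm (Bp rm p F x) = 0"
proof -
  obtain A B where "O_linear A" "O_linear B" "F = (\<lambda>x. A x + lm J (B x))"
    using assms by (rule slice_operatorsE)
  then have "Bp rm p F x = assocM lm rm J (B x) p"
    by (simp add: Bp_def assocM_def O_linear_def rm_linear)
  then show ?thesis
    by (simp add: RePart_eq_re_proj re_proj_assocM)
qed

end

lemma bounded_linear_funpow:
  fixes f :: "'a::real_normed_vector \<Rightarrow> 'a"
  shows "bounded_linear f \<Longrightarrow> bounded_linear (f ^^ n)"
  by (induction n) (simp_all add: id_def o_def bounded_linear_compose)

theorem mainTheorem16:
  fixes lm :: "octo \<Rightarrow> 'v::banach \<Rightarrow> 'v" and rm :: "'v \<Rightarrow> octo \<Rightarrow> 'v"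
    and J :: octo and T0 T1 S0 S1 T S :: "'v \<Rightarrow> 'v"
  assumes "Banach_O_bimodule lm rm"
    and "J \<in> oct_sphere"
    and "T0 \<in> B_O rm" and "T1 \<in> B_O rm" and "S0 \<in> B_O rm" and "S1 \<in> B_O rm"
    and "T = (\<lambda>x. T0 x + odot lm rm J T1 x)"
    and "S = (\<lambda>x. S0 x + odot lm rm J S1 x)"
  shows "T \<circ> S = ocirc lm rm T S \<and> power_associative lm rm T \<and>
         (\<forall>n. T ^^ n = opow lm rm T n)"
proof -
  interpret octo_bimodule lm rm
    using assms(1) by unfold_locales (simp add: Banach_O_bimodule_def)
  have J: "J \<cdot>\<^sub>O J = - oe 0"
    using assms(2) by (simp add: oct_sphere_def)
  have O_linear: "O_linear A" if "A \<in> B_O rm" for A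
    using that by (simp add: B_O_def O_linear_def bounded_linear.linear)
  have slice: "(\<lambda>x. A x + odot lm rm J B x) \<in> slice_operators J" if "A \<in> B_O rm" "B \<in> B_O rm" for A B
    using that slice_operatorsI[OF O_linear O_linear] by (simp add: odot_def Bp_def B_O_def)
  have T: "T \<in> slice_operators J" and S: "S \<in> slice_operators J"
    by (simp_all add: assms(3-8) slice)
  have "bounded_linear (lm J)"
    using assms(1) by (intro bounded_linear_intro[where K = "norm J"])
      (simp_all add: lm_linear Banach_O_bimodule_def mult.commute)
  then have "bounded_linear T"
    using assms(3,4) by (simp add: assms(7) odot_def Bp_def B_O_def bounded_linear_add
        bounded_linear_compose[of "lm J", unfolded o_def])
  then have "T ^^ n \<in> B_RO lm rm" for n
    by (simp add: B_RO_def bounded_linear_funpow RePart_Bp_slice_operators[OF funpow_slice_operators[OF J T]])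
  then show ?thesis
    by (simp add: ocirc_def opow_def power_associative_def
        oext_slice_operators[OF comp_slice_operators[OF J T S]]
        oext_slice_operators[OF funpow_slice_operators[OF J T]])
qed

end
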